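(* Let $R$ be a principal ideal domain and $I$ an ideal of $R[X]$ with $I\cap R = Rd$. If the image of $I$ in $(R/dR)[X]$ is generated by a single element which is a non-zero-divisor of $(R/dR)[X]$, then $I$ is power stable.
   Context: An ideal $I$ of the polynomial ring $R[X]$ over an integral domain $R$ is called power stable if $I^t\cap R = (I\cap R)^t$ for all integers $t\geq 1$. *)

theory Defs
  imports "HOL-Computational_Algebra.Polynomial"
begin

definition is_ideal :: "'a::comm_ring_1 set \<Rightarrow> bool" where
  "is_ideal I \<longleftrightarrow> 0 \<in> I \<and> (\<forall>x\<in>I. \<forall>y\<in>I. x + y \<in> I) \<and> (\<forall>r x. x \<in> I \<longrightarrow> r * x \<in> I)"

definition ideal_of :: "'a::comm_ring_1 set \<Rightarrow> 'a set" where
  "ideal_of S = \<Inter>{J. is_ideal J \<and> S \<subseteq> J}"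

definition ideal_mult :: "'a::comm_ring_1 set \<Rightarrow> 'a set \<Rightarrow> 'a set" where
  "ideal_mult I J = ideal_of {x * y | x y. x \<in> I \<and> y \<in> J}"

fun ideal_pow :: "'a::comm_ring_1 set \<Rightarrow> nat \<Rightarrow> 'a set" where
  "ideal_pow I 0 = UNIV"
| "ideal_pow I (Suc n) = ideal_mult I (ideal_pow I n)"

definition principal :: "'a::comm_ring_1 \<Rightarrow> 'a set" where
  "principal a = {a * r | r. True}"

definition is_PID :: "'a::idom itself \<Rightarrow> bool" where
  "is_PID _ \<longleftrightarrow> (\<forall>I::'a set. is_ideal I \<longrightarrow> (\<exists>a. I = principal a))"

text \<open>Contraction I \<inter> R of an ideal of R[X] to R (constants identified with R).\<close>
definition contr :: "'a::comm_ring_1 poly set \<Rightarrow> 'a set" where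
  "contr I = {c. [:c:] \<in> I}"

definition power_stable :: "'a::comm_ring_1 poly set \<Rightarrow> bool" where
  "power_stable I \<longleftrightarrow> (\<forall>t::nat. t \<ge> 1 \<longrightarrow> contr (ideal_pow I t) = ideal_pow (contr I) t)"

text \<open>The kernel d R[X] of the reduction map R[X] \<rightarrow> (R/dR)[X].\<close>
definition dRX :: "'a::comm_ring_1 \<Rightarrow> 'a poly set" where
  "dRX d = {smult d h | h. True}"

text \<open>The image of I in (R/dR)[X] is generated by the class of f:
  equivalently I + dR[X] = f R[X] + dR[X].\<close>
definition image_generated_by :: "'a::comm_ring_1 poly set \<Rightarrow> 'a \<Rightarrow> 'a poly \<Rightarrow> bool" where
  "image_generated_by I d f \<longleftrightarrow>
     {a + b | a b. a \<in> I \<and> b \<in> dRX d} = {f * q + b | q b. b \<in> dRX d}"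

text \<open>The class of f is a non-zero-divisor of (R/dR)[X].\<close>
definition nzd_mod :: "'a::comm_ring_1 \<Rightarrow> 'a poly \<Rightarrow> bool" where
  "nzd_mod d f \<longleftrightarrow> (\<forall>g. g * f \<in> dRX d \<longrightarrow> g \<in> dRX d)"

end

theory Submission
  imports Defs
begin

(*
  Pick a polynomial f \<in> I whose class generates the image of I in (R/dR)[X];
  then I \<subseteq> f R[X] + dR[X], and f is still a non-zero-divisor modulo d, hence so is
  every power f^n.  An induction on products shows
      I^(n+1) \<subseteq> f^(n+1) R[X] + d I^n.
  Now let c \<in> I^(n+1) \<inter> R, written c = f^(n+1) g + d w with w \<in> I^n.  Since c \<in> I \<inter> R = dR,
  the term f^(n+1) g lies in dR[X], so d divides g, and c = d w' with w' \<in> I^n.  Comparing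
  degrees, w' is a constant, so it lies in I^n \<inter> R = d^n R by induction and c \<in> d^(n+1) R.
  Together with the trivial inclusion this gives I^t \<inter> R = (dR)^t for all t, i.e. power
  stability.  The argument only needs R to be an integral domain.
*)

lemma ideal_of_is_ideal: "is_ideal (ideal_of S)"
  unfolding is_ideal_def ideal_of_def by auto

lemma ideal_of_superset: "S \<subseteq> ideal_of S"
  unfolding ideal_of_def by auto

lemma ideal_of_least: "is_ideal J \<Longrightarrow> S \<subseteq> J \<Longrightarrow> ideal_of S \<subseteq> J"
  unfolding ideal_of_def by auto

lemma ideal_zero: "is_ideal I \<Longrightarrow> 0 \<in> I"
  unfolding is_ideal_def by auto

lemma ideal_add: "is_ideal I \<Longrightarrow> x \<in> I \<Longrightarrow> y \<in> I \<Longrightarrow> x + y \<in> I"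
  unfolding is_ideal_def by auto

lemma ideal_mult_left: "is_ideal I \<Longrightarrow> x \<in> I \<Longrightarrow> r * x \<in> I"
  unfolding is_ideal_def by auto

lemma ideal_mult_right: "is_ideal I \<Longrightarrow> x \<in> I \<Longrightarrow> x * r \<in> I"
  unfolding is_ideal_def by (auto simp: mult.commute)

lemma ideal_mult_mem: "x \<in> I \<Longrightarrow> y \<in> J \<Longrightarrow> x * y \<in> ideal_mult I J"
  unfolding ideal_mult_def by (rule subsetD[OF ideal_of_superset]) blast

lemma ideal_mult_subset: "is_ideal I \<Longrightarrow> ideal_mult I J \<subseteq> I"
  unfolding ideal_mult_def by (rule ideal_of_least) (auto intro: ideal_mult_right)

lemma ideal_pow_is_ideal: "is_ideal (ideal_pow I n)"
  by (cases n) (simp_all add: is_ideal_def[of UNIV] ideal_mult_def ideal_of_is_ideal)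

lemma ideal_pow_Suc_subset: "is_ideal I \<Longrightarrow> ideal_pow I (Suc n) \<subseteq> I"
  by (simp add: ideal_mult_subset)

lemma power_mem_ideal_pow: "f \<in> I \<Longrightarrow> f ^ n \<in> ideal_pow I n"
  by (induction n) (auto intro: ideal_mult_mem)

lemma principal_is_ideal: "is_ideal (principal a)"
  unfolding is_ideal_def principal_def
  by (auto simp: algebra_simps)
     (metis mult_zero_left, metis distrib_right, metis mult.assoc)

lemma generator_mem_principal: "a \<in> principal a"
  unfolding principal_def by (auto intro: exI[of _ 1])

lemma principal_pow: "ideal_pow (principal a) t = principal (a ^ t)"
proof (induction t)
  case 0
  then show ?case by (auto simp: principal_def)
next
  case (Suc n)
  have "ideal_mult (principal a) (principal (a ^ n)) \<subseteq> principal (a ^ Suc n)"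
    unfolding ideal_mult_def
  proof (rule ideal_of_least[OF principal_is_ideal], clarify)
    fix x y assume "x \<in> principal a" "y \<in> principal (a ^ n)"
    then obtain r s where "x = a * r" "y = a ^ n * s" by (auto simp: principal_def)
    then have "x * y = a ^ Suc n * (r * s)" by (simp add: algebra_simps)
    then show "x * y \<in> principal (a ^ Suc n)" by (auto simp: principal_def)
  qed
  moreover have "principal (a ^ Suc n) \<subseteq> ideal_mult (principal a) (principal (a ^ n))"
  proof
    fix x assume "x \<in> principal (a ^ Suc n)"
    then obtain r where "x = a * (a ^ n * r)" by (auto simp: principal_def algebra_simps)
    moreover have "a ^ n * r \<in> principal (a ^ n)" unfolding principal_def by blast
    ultimately show "x \<in> ideal_mult (principal a) (principal (a ^ n))"
      using ideal_mult_mem[OF generator_mem_principal] by metis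
  qed
  ultimately show ?case using Suc by simp
qed

lemma generator_in_ideal:
  fixes I :: "'a::comm_ring_1 poly set"
  assumes gen: "image_generated_by I d f0"
  obtains f h0 where "f \<in> I" "f0 = f + smult d h0"
    and "\<forall>x\<in>I. \<exists>q h. x = f * q + smult d h"
proof -
  have "f0 * 1 + smult d 0 \<in> {f0 * q + b | q b. b \<in> dRX d}" unfolding dRX_def by blast
  then have "f0 \<in> {a + b | a b. a \<in> I \<and> b \<in> dRX d}"
    using gen unfolding image_generated_by_def by simp
  then obtain f h0 where f: "f \<in> I" and f0: "f0 = f + smult d h0" unfolding dRX_def by blast
  have "\<exists>q h. x = f * q + smult d h" if "x \<in> I" for x
  proof -
    have "x + smult d 0 \<in> {a + b | a b. a \<in> I \<and> b \<in> dRX d}"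
      using that unfolding dRX_def by blast
    then have "x \<in> {f0 * q + b | q b. b \<in> dRX d}"
      using gen unfolding image_generated_by_def by simp
    then obtain q h where "x = f0 * q + smult d h" unfolding dRX_def by blast
    then have "x = f * q + smult d (h0 * q + h)"
      by (simp add: f0 algebra_simps smult_add_right)
    then show ?thesis by blast
  qed
  with f f0 that show ?thesis by blast
qed

lemma nzd_mod_congruent:
  fixes f :: "'a::comm_ring_1 poly"
  assumes "nzd_mod d f0" and "f0 = f + smult d h0"
  shows "nzd_mod d f"
  unfolding nzd_mod_def
proof (intro allI impI)
  fix g assume "g * f \<in> dRX d"
  then obtain k where "g * f = smult d k" unfolding dRX_def by blast
  then have "g * f0 = smult d (k + g * h0)"
    by (simp add: assms(2) algebra_simps smult_add_right)
  then show "g \<in> dRX d" using assms(1) unfolding nzd_mod_def dRX_def by blast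
qed

lemma nzd_mod_power:
  assumes "nzd_mod d f"
  shows "g * f ^ n \<in> dRX d \<Longrightarrow> g \<in> dRX d"
proof (induction n arbitrary: g)
  case 0
  then show ?case by simp
next
  case (Suc n)
  then have "(g * f) * f ^ n \<in> dRX d" by (simp add: algebra_simps)
  then have "g * f \<in> dRX d" using Suc.IH by blast
  then show ?case using assms unfolding nzd_mod_def by blast
qed

definition shifted_sum :: "'a::comm_ring_1 poly \<Rightarrow> nat \<Rightarrow> 'a \<Rightarrow> 'a poly set \<Rightarrow> 'a poly set" where
  "shifted_sum f k d J = {f ^ k * g + smult d w | g w. w \<in> J}"

lemma shifted_sum_is_ideal:
  assumes J: "is_ideal J"
  shows "is_ideal (shifted_sum f k d J)"
  unfolding is_ideal_def shifted_sum_def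
proof (intro conjI ballI allI impI)
  show "0 \<in> {f ^ k * g + smult d w | g w. w \<in> J}"
    using ideal_zero[OF J] by (intro CollectI exI[of _ 0]) auto
next
  fix x y assume "x \<in> {f ^ k * g + smult d w | g w. w \<in> J}"
    and "y \<in> {f ^ k * g + smult d w | g w. w \<in> J}"
  then obtain g1 w1 g2 w2 where "x = f ^ k * g1 + smult d w1" "w1 \<in> J"
    and "y = f ^ k * g2 + smult d w2" "w2 \<in> J" by blast
  then have "x + y = f ^ k * (g1 + g2) + smult d (w1 + w2)" "w1 + w2 \<in> J"
    using ideal_add[OF J] by (auto simp: algebra_simps smult_add_right)
  then show "x + y \<in> {f ^ k * g + smult d w | g w. w \<in> J}" by blast
next
  fix r x assume "x \<in> {f ^ k * g + smult d w | g w. w \<in> J}"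
  then obtain g1 w1 where "x = f ^ k * g1 + smult d w1" and w1: "w1 \<in> J" by blast
  then have "r * x = f ^ k * (r * g1) + smult d (r * w1)" by (simp add: algebra_simps)
  moreover have "r * w1 \<in> J" using ideal_mult_left[OF J w1] .
  ultimately show "r * x \<in> {f ^ k * g + smult d w | g w. w \<in> J}" by blast
qed

lemma ideal_pow_decomposition:
  fixes I :: "'a::comm_ring_1 poly set"
  assumes I: "is_ideal I" and f: "f \<in> I"
    and gen: "\<forall>x\<in>I. \<exists>q h. x = f * q + smult d h"
  shows "ideal_pow I (Suc n) \<subseteq> shifted_sum f (Suc n) d (ideal_pow I n)"
proof (induction n)
  case 0
  have "x \<in> shifted_sum f 1 d UNIV" if "x \<in> I" for x
    using gen that unfolding shifted_sum_def by auto
  then show ?case using ideal_pow_Suc_subset[OF I, of 0] by auto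
next
  case (Suc m)
  let ?J = "ideal_pow I (Suc m)"
  have "x * y \<in> shifted_sum f (Suc (Suc m)) d ?J" if x: "x \<in> I" and y: "y \<in> ?J" for x y
  proof -
    obtain q h where xq: "x = f * q + smult d h" using gen x by blast
    obtain g w where yq: "y = f ^ Suc m * g + smult d w" and w: "w \<in> ideal_pow I m"
      using Suc.IH y unfolding shifted_sum_def by blast
    have "f * (q * w) \<in> ?J"
      using ideal_mult_mem[OF f ideal_mult_left[OF ideal_pow_is_ideal w]] by simp
    moreover have "h * y \<in> ?J" using ideal_mult_left[OF ideal_pow_is_ideal y] .
    ultimately have "f * (q * w) + h * y \<in> ?J" using ideal_add[OF ideal_pow_is_ideal] by blast
    moreover have "x * y = f ^ Suc (Suc m) * (q * g) + smult d (f * (q * w) + h * y)"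
      unfolding xq yq by (simp add: algebra_simps smult_add_right)
    ultimately show ?thesis unfolding shifted_sum_def by blast
  qed
  then show ?case
    unfolding ideal_pow.simps(2)[of I "Suc m"] ideal_mult_def
    by (intro ideal_of_least shifted_sum_is_ideal ideal_pow_is_ideal) auto
qed

lemma smult_eq_const:
  fixes w :: "'a::idom poly"
  assumes "d \<noteq> 0" and "[:c:] = smult d w"
  shows "w = [:coeff w 0:]"
proof -
  have "degree w = 0" using arg_cong[OF assms(2), of degree] assms(1) by simp
  then show ?thesis by (rule degree_0_id[symmetric])
qed

lemma contr_ideal_pow_Suc_subset:
  fixes I :: "'a::idom poly set"
  assumes I: "is_ideal I" and f: "f \<in> I"
    and gen: "\<forall>x\<in>I. \<exists>q h. x = f * q + smult d h"
    and nzd: "nzd_mod d f"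
    and contr_I: "contr I = principal d"
    and IH: "contr (ideal_pow I n) = principal (d ^ n)"
  shows "contr (ideal_pow I (Suc n)) \<subseteq> principal (d ^ Suc n)"
proof
  fix c assume "c \<in> contr (ideal_pow I (Suc n))"
  then have cI: "[:c:] \<in> ideal_pow I (Suc n)" by (simp add: contr_def)
  obtain g w where cgw: "[:c:] = f ^ Suc n * g + smult d w" and w: "w \<in> ideal_pow I n"
    using ideal_pow_decomposition[OF I f gen] cI unfolding shifted_sum_def by blast
  have "c \<in> principal d"
    using cI ideal_pow_Suc_subset[OF I] contr_I unfolding contr_def by blast
  then obtain r where cr: "c = d * r" by (auto simp: principal_def)
  text \<open>The term \<open>f^(n+1) g\<close> vanishes modulo \<open>d\<close>, so \<open>d\<close> divides \<open>g\<close>.\<close>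
  have "g * f ^ Suc n = smult d ([:r:] - w)"
    using cgw by (simp add: cr algebra_simps smult_diff_right)
  then have "g * f ^ Suc n \<in> dRX d" unfolding dRX_def by blast
  then obtain g' where g': "g = smult d g'" using nzd_mod_power[OF nzd] unfolding dRX_def by blast
  define w' where "w' = f ^ Suc n * g' + w"
  have "f ^ n * (f * g') \<in> ideal_pow I n"
    by (rule ideal_mult_right[OF ideal_pow_is_ideal power_mem_ideal_pow[OF f]])
  then have w': "w' \<in> ideal_pow I n"
    unfolding w'_def using ideal_add[OF ideal_pow_is_ideal] w by (simp add: algebra_simps)
  have cw': "[:c:] = smult d w'"
    unfolding w'_def using cgw by (simp add: g' algebra_simps smult_add_right)
  show "c \<in> principal (d ^ Suc n)"
  proof (cases "d = 0")
    case True
    then show ?thesis using cr by (auto simp: principal_def)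
  next
    case False
    then have "[:coeff w' 0:] \<in> ideal_pow I n" using smult_eq_const[OF _ cw'] w' by simp
    then obtain s where "coeff w' 0 = d ^ n * s" using IH by (auto simp: contr_def principal_def)
    moreover have "c = d * coeff w' 0" using arg_cong[OF cw', of "\<lambda>p. coeff p 0"] by simp
    ultimately show ?thesis by (auto simp: principal_def algebra_simps)
  qed
qed

lemma principal_pow_subset_contr:
  assumes I: "is_ideal I" and d: "[:d:] \<in> I"
  shows "principal (d ^ t) \<subseteq> contr (ideal_pow I t)"
proof
  fix c assume "c \<in> principal (d ^ t)"
  then obtain r where c: "c = d ^ t * r" by (auto simp: principal_def)
  have "[:d:] ^ t * [:r:] \<in> ideal_pow I t"
    using ideal_mult_right[OF ideal_pow_is_ideal power_mem_ideal_pow[OF d]] by blast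
  then show "c \<in> contr (ideal_pow I t)" by (simp add: contr_def c poly_const_pow mult.commute)
qed

theorem theorem3p3:
  fixes I :: "'a::idom poly set" and d :: 'a
  assumes "is_PID TYPE('a)"
    and "is_ideal I"
    and "contr I = principal d"
    and "\<exists>f. image_generated_by I d f \<and> nzd_mod d f"
  shows "power_stable I"
proof -
  note I = assms(2) and contr_I = assms(3)
  obtain f0 where gen0: "image_generated_by I d f0" and nzd0: "nzd_mod d f0"
    using assms(4) by blast
  obtain f h0 where f: "f \<in> I" and f0: "f0 = f + smult d h0"
    and gen: "\<forall>x\<in>I. \<exists>q h. x = f * q + smult d h"
    using generator_in_ideal[OF gen0] by blast
  have nzd: "nzd_mod d f" using nzd_mod_congruent[OF nzd0 f0] .
  have d: "[:d:] \<in> I" using generator_mem_principal[of d] contr_I by (auto simp: contr_def)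
  have "contr (ideal_pow I t) = principal (d ^ t)" for t
  proof (induction t)
    case 0
    then show ?case by (auto simp: contr_def principal_def)
  next
    case (Suc n)
    then show ?case
      using contr_ideal_pow_Suc_subset[OF I f gen nzd contr_I]
        principal_pow_subset_contr[OF I d] by blast
  qed
  then show ?thesis unfolding power_stable_def contr_I principal_pow by simp
qed

end
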